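(* For every step $h\in[H]$, every state $s\in\mathcal S$ and every $\boldsymbol\theta,\boldsymbol\theta'\in\mathbb R^d$, \[ |V^\star_h(\boldsymbol\theta,s)-V^\star_h(\boldsymbol\theta',s)|\le\sqrt d\,(H-h+1)\,\|\boldsymbol\theta-\boldsymbol\theta'\|_2 . \]
   Context: Episodic two-player zero-sum vector-valued Markov game: finite state space $\mathcal S$, finite action sets $\mathcal A,\mathcal B$, horizon $H$, transition kernels $P_h(\cdot\mid s,a,b)$, return functions $\mathbf r_h:\mathcal S\times\mathcal A\times\mathcal B\to[0,1]^d$. For $\boldsymbol\theta\in\mathbb R^d$ and policies $\mu$ (min-player) and $\nu$ (max-player), $V^{\mu,\nu}_h(\boldsymbol\theta,s)=\mathbb E_{\mu,\nu}[\sum_{l=h}^H\boldsymbol\theta\cdot\mathbf r_l(s_l,a_l,b_l)\mid s_h=s]$, and $V^\star_h(\boldsymbol\theta,s)=\min_\mu\max_\nu V^{\mu,\nu}_h(\boldsymbol\theta,s)$ is the minimax (Nash equilibrium) value of the scalarized game with reward $\boldsymbol\theta\cdot\mathbf r_h$. *)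

theory Defs
  imports "HOL-Analysis.Analysis" "HOL-Probability.Probability_Mass_Function"
begin

text \<open>Episodic two-player zero-sum vector-valued Markov game.
  Steps are 1..H.\<close>

primrec Vpol_aux ::
  "(nat \<Rightarrow> 's::finite \<Rightarrow> 'a::finite \<Rightarrow> 'b::finite \<Rightarrow> 's pmf) \<Rightarrow>
   (nat \<Rightarrow> 's \<Rightarrow> 'a \<Rightarrow> 'b \<Rightarrow> real^'d) \<Rightarrow>
   (nat \<Rightarrow> 's \<Rightarrow> 'a pmf) \<Rightarrow> (nat \<Rightarrow> 's \<Rightarrow> 'b pmf) \<Rightarrow>
   real^'d \<Rightarrow> nat \<Rightarrow> nat \<Rightarrow> 's \<Rightarrow> real" where
  "Vpol_aux P r \<mu> \<nu> \<theta> 0 h s = 0"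
| "Vpol_aux P r \<mu> \<nu> \<theta> (Suc n) h s =
     (\<Sum>a\<in>UNIV. \<Sum>b\<in>UNIV. pmf (\<mu> h s) a * pmf (\<nu> h s) b *
        (\<theta> \<bullet> r h s a b + (\<Sum>s'\<in>UNIV. pmf (P h s a b) s' * Vpol_aux P r \<mu> \<nu> \<theta> n (Suc h) s')))"

text \<open>V^{\<mu>,\<nu>}_h(\<theta>,s) = E[\<Sum>_{l=h}^H \<theta>\<bullet>r_l | s_h = s] (horizon H).\<close>
definition Vpol ::
  "(nat \<Rightarrow> 's::finite \<Rightarrow> 'a::finite \<Rightarrow> 'b::finite \<Rightarrow> 's pmf) \<Rightarrow>
   (nat \<Rightarrow> 's \<Rightarrow> 'a \<Rightarrow> 'b \<Rightarrow> real^'d) \<Rightarrow> nat \<Rightarrow>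
   (nat \<Rightarrow> 's \<Rightarrow> 'a pmf) \<Rightarrow> (nat \<Rightarrow> 's \<Rightarrow> 'b pmf) \<Rightarrow>
   nat \<Rightarrow> real^'d \<Rightarrow> 's \<Rightarrow> real" where
  "Vpol P r H \<mu> \<nu> h \<theta> s = Vpol_aux P r \<mu> \<nu> \<theta> (H + 1 - h) h s"

definition Vstar ::
  "(nat \<Rightarrow> 's::finite \<Rightarrow> 'a::finite \<Rightarrow> 'b::finite \<Rightarrow> 's pmf) \<Rightarrow>
   (nat \<Rightarrow> 's \<Rightarrow> 'a \<Rightarrow> 'b \<Rightarrow> real^'d) \<Rightarrow> nat \<Rightarrow>
   nat \<Rightarrow> real^'d \<Rightarrow> 's \<Rightarrow> real" where
  "Vstar P r H h \<theta> s =
     (INF \<mu>::nat \<Rightarrow> 's \<Rightarrow> 'a pmf. SUP \<nu>::nat \<Rightarrow> 's \<Rightarrow> 'b pmf. Vpol P r H \<mu> \<nu> h \<theta> s)"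

end

theory Submission
  imports Defs
begin

text \<open>For fixed policies \<mu>, \<nu> the value is linear in \<theta>, so the difference of the values
  at \<theta> and \<theta>' is the value at \<theta> - \<theta>'.
  Each of the H - h + 1 remaining steps contributes an average of the rewards
  (\<theta> - \<theta>') \<bullet> r, and by Cauchy-Schwarz these are bounded by \<surd>d \<parallel>\<theta> - \<theta>'\<parallel> since r takes values in [0,1]^d.
  A uniform bound on the difference of two functions bounds the difference of
  their suprema and infima, hence of their min-max values.\<close>

lemma norm_le_sqrt_card_if_components_le:
  fixes x :: "real^'n"
  assumes "\<And>i. \<bar>x $ i\<bar> \<le> c"
  shows "norm x \<le> sqrt (real CARD('n)) * c"
proof -
  have "norm x \<le> L2_set (\<lambda>_. c) (UNIV :: 'n set)"
    unfolding norm_vec_def by (rule L2_set_mono) (use assms in auto)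
  also have "\<dots> = sqrt (real CARD('n)) * c"
    using order_trans[OF abs_ge_zero assms] by (simp add: L2_set_constant)
  finally show ?thesis .
qed

lemma abs_inner_le_if_unit_cube:
  fixes \<theta> x :: "real^'n"
  assumes "\<And>i. 0 \<le> x $ i \<and> x $ i \<le> 1"
  shows "\<bar>\<theta> \<bullet> x\<bar> \<le> sqrt (real CARD('n)) * norm \<theta>"
proof -
  have "norm x \<le> sqrt (real CARD('n))"
    using norm_le_sqrt_card_if_components_le[of x 1] assms by fastforce
  then show ?thesis
    using Cauchy_Schwarz_ineq2[of \<theta> x] by (simp add: mult_left_mono mult.commute order_trans)
qed

lemma abs_convex_combination_le:
  fixes w f :: "'x \<Rightarrow> real"
  assumes "finite A" "\<And>i. i \<in> A \<Longrightarrow> 0 \<le> w i" "sum w A = 1"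
    and "\<And>i. i \<in> A \<Longrightarrow> \<bar>f i\<bar> \<le> c"
  shows "\<bar>\<Sum>i\<in>A. w i * f i\<bar> \<le> c"
proof -
  have "\<bar>\<Sum>i\<in>A. w i * f i\<bar> \<le> (\<Sum>i\<in>A. w i * c)"
    using sum_abs[of "\<lambda>i. w i * f i" A] sum_mono[of A "\<lambda>i. \<bar>w i * f i\<bar>" "\<lambda>i. w i * c"]
    by (simp add: abs_mult assms mult_left_mono)
  also have "\<dots> = c"
    using assms(3) by (simp add: sum_distrib_right[symmetric])
  finally show ?thesis .
qed

lemma abs_pmf_expectation_le:
  fixes p :: "'x::finite pmf"
  assumes "\<And>x. \<bar>f x\<bar> \<le> c"
  shows "\<bar>\<Sum>x\<in>UNIV. pmf p x * f x\<bar> \<le> c"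
  by (rule abs_convex_combination_le) (auto simp: assms sum_pmf_eq_1)

lemma Vpol_aux_diff:
  "Vpol_aux P r \<mu> \<nu> (\<theta> - \<theta>') n h s = Vpol_aux P r \<mu> \<nu> \<theta> n h s - Vpol_aux P r \<mu> \<nu> \<theta>' n h s"
proof (induction n arbitrary: h s)
  case 0
  then show ?case by simp
next
  case (Suc n)
  let ?E = "\<lambda>t a b. \<Sum>s'\<in>UNIV. pmf (P h s a b) s' * Vpol_aux P r \<mu> \<nu> t n (Suc h) s'"
  have E_diff: "?E (\<theta> - \<theta>') a b = ?E \<theta> a b - ?E \<theta>' a b" for a b
    by (simp add: Suc.IH right_diff_distrib sum_subtractf)
  have "w * ((\<theta> - \<theta>') \<bullet> r h s a b + ?E (\<theta> - \<theta>') a b)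
      = w * (\<theta> \<bullet> r h s a b + ?E \<theta> a b) - w * (\<theta>' \<bullet> r h s a b + ?E \<theta>' a b)" for w a b
    unfolding E_diff inner_diff_left by (simp add: algebra_simps)
  then show ?case
    by (simp only: Vpol_aux.simps sum_subtractf)
qed

lemma abs_Vpol_aux_le:
  assumes "\<And>l s a b. \<bar>\<theta> \<bullet> r l s a b\<bar> \<le> c"
  shows "\<bar>Vpol_aux P r \<mu> \<nu> \<theta> n h s\<bar> \<le> real n * c"
proof (induction n arbitrary: h s)
  case 0
  then show ?case by simp
next
  case (Suc n)
  have step: "\<bar>\<theta> \<bullet> r h s a b + (\<Sum>s'\<in>UNIV. pmf (P h s a b) s' * Vpol_aux P r \<mu> \<nu> \<theta> n (Suc h) s')\<bar>
      \<le> real (Suc n) * c" for a b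
  proof -
    have "\<bar>\<Sum>s'\<in>UNIV. pmf (P h s a b) s' * Vpol_aux P r \<mu> \<nu> \<theta> n (Suc h) s'\<bar> \<le> real n * c"
      by (rule abs_pmf_expectation_le) (rule Suc.IH)
    then show ?thesis
      using assms[of h s a b] by (auto simp: abs_le_iff algebra_simps)
  qed
  show ?case
    using abs_pmf_expectation_le[OF abs_pmf_expectation_le[OF step]]
    by (simp add: mult.assoc sum_distrib_left del: of_nat_Suc)
qed

lemma cSUP_le_cSUP_plus:
  fixes f g :: "'x \<Rightarrow> real"
  assumes "bdd_above (range g)" "\<And>x. f x \<le> g x + L"
  shows "(SUP x. f x) \<le> (SUP x. g x) + L"
proof (rule cSUP_least)
  show "f x \<le> (SUP x. g x) + L" for x
    using cSUP_upper[OF UNIV_I assms(1), of x] assms(2)[of x] by linarith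
qed simp

lemma cINF_le_cINF_plus:
  fixes f g :: "'x \<Rightarrow> real"
  assumes "bdd_below (range f)" "\<And>x. f x \<le> g x + L"
  shows "(INF x. f x) \<le> (INF x. g x) + L"
proof -
  have "(INF x. f x) - L \<le> (INF x. g x)"
  proof (rule cINF_greatest)
    show "(INF x. f x) - L \<le> g x" for x
      using cINF_lower[OF assms(1) UNIV_I, of x] assms(2)[of x] by linarith
  qed simp
  then show ?thesis by linarith
qed

lemma abs_cSUP_diff_le:
  fixes f g :: "'x \<Rightarrow> real"
  assumes "bdd_above (range f)" "bdd_above (range g)" "\<And>x. \<bar>f x - g x\<bar> \<le> L"
  shows "\<bar>(SUP x. f x) - (SUP x. g x)\<bar> \<le> L"
proof -
  have "f x \<le> g x + L" "g x \<le> f x + L" for x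
    using assms(3)[of x] by (auto simp: abs_le_iff)
  then show ?thesis
    using cSUP_le_cSUP_plus[of g f L] cSUP_le_cSUP_plus[of f g L] assms(1,2) by (simp add: abs_le_iff)
qed

lemma abs_cINF_diff_le:
  fixes f g :: "'x \<Rightarrow> real"
  assumes "bdd_below (range f)" "bdd_below (range g)" "\<And>x. \<bar>f x - g x\<bar> \<le> L"
  shows "\<bar>(INF x. f x) - (INF x. g x)\<bar> \<le> L"
proof -
  have "f x \<le> g x + L" "g x \<le> f x + L" for x
    using assms(3)[of x] by (auto simp: abs_le_iff)
  then show ?thesis
    using cINF_le_cINF_plus[of g f L] cINF_le_cINF_plus[of f g L] assms(1,2) by (simp add: abs_le_iff)
qed

lemma abs_INF_SUP_diff_le:
  fixes f g :: "'x \<Rightarrow> 'y \<Rightarrow> real"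
  assumes "\<And>x y. \<bar>f x y\<bar> \<le> B" "\<And>x y. \<bar>g x y\<bar> \<le> B'"
    and "\<And>x y. \<bar>f x y - g x y\<bar> \<le> L"
  shows "\<bar>(INF x. SUP y. f x y) - (INF x. SUP y. g x y)\<bar> \<le> L"
proof -
  have bdd_above: "bdd_above (range (k x))" if "\<And>y. \<bar>k x y\<bar> \<le> C"
    for k :: "'x \<Rightarrow> 'y \<Rightarrow> real" and x C
    using that by (intro bdd_aboveI[of _ C]) (auto simp: abs_le_iff)
  have bdd_below: "bdd_below (range (\<lambda>x. SUP y. k x y))" if "\<And>x y. \<bar>k x y\<bar> \<le> C"
    for k :: "'x \<Rightarrow> 'y \<Rightarrow> real" and C
  proof (rule bdd_belowI2)
    fix x
    have "k x undefined \<le> (SUP y. k x y)"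
      using that by (intro cSUP_upper bdd_above) auto
    then show "- C \<le> (SUP y. k x y)"
      using that[of x undefined] by linarith
  qed
  show ?thesis
    using assms by (intro abs_cINF_diff_le abs_cSUP_diff_le bdd_above bdd_below)
qed

theorem lemma7:
  fixes P :: "nat \<Rightarrow> 's::finite \<Rightarrow> 'a::finite \<Rightarrow> 'b::finite \<Rightarrow> 's pmf"
    and r :: "nat \<Rightarrow> 's \<Rightarrow> 'a \<Rightarrow> 'b \<Rightarrow> real^'d"
    and H h :: nat and s :: 's and \<theta> \<theta>' :: "real^'d"
  assumes r_range: "\<And>l s a b i. 0 \<le> r l s a b $ i \<and> r l s a b $ i \<le> 1"
    and h: "h \<in> {1..H}"
  shows "\<bar>Vstar P r H h \<theta> s - Vstar P r H h \<theta>' s\<bar>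
           \<le> sqrt (real CARD('d)) * real (H - h + 1) * norm (\<theta> - \<theta>')"
proof -
  define n where "n = H - h + 1"
  let ?V = "\<lambda>t \<mu> \<nu>. Vpol_aux P r \<mu> \<nu> t n h s"
  have bound: "\<bar>?V t \<mu> \<nu>\<bar> \<le> real n * (sqrt (real CARD('d)) * norm t)" for t \<mu> \<nu>
    by (intro abs_Vpol_aux_le abs_inner_le_if_unit_cube r_range)
  have "Vstar P r H h t s = (INF \<mu>. SUP \<nu>. ?V t \<mu> \<nu>)" for t
    using h by (simp add: Vstar_def Vpol_def n_def Suc_diff_le)
  moreover have "\<bar>(INF \<mu>. SUP \<nu>. ?V \<theta> \<mu> \<nu>) - (INF \<mu>. SUP \<nu>. ?V \<theta>' \<mu> \<nu>)\<bar>
      \<le> real n * (sqrt (real CARD('d)) * norm (\<theta> - \<theta>'))"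
  proof (rule abs_INF_SUP_diff_le)
    show "\<bar>?V \<theta> \<mu> \<nu> - ?V \<theta>' \<mu> \<nu>\<bar> \<le> real n * (sqrt (real CARD('d)) * norm (\<theta> - \<theta>'))"
      for \<mu> \<nu>
      using bound[where t = "\<theta> - \<theta>'"] by (simp only: Vpol_aux_diff)
  qed (fact bound)+
  ultimately show ?thesis
    by (simp add: n_def algebra_simps)
qed

end
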